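(* Every even-dimensional finite-dimensional real Lie algebra $\mathfrak g$ with $\dim[\mathfrak g,\mathfrak g]=1$ carries an abelian complex structure.
   Context: An abelian complex structure on a real Lie algebra $\mathfrak g$ is a linear map $J:\mathfrak g\to\mathfrak g$ with $J^2=-\mathrm{Id}$ and $[Jx,Jy]=[x,y]$ for all $x,y\in\mathfrak g$. *)

theory Defs
  imports "HOL-Analysis.Analysis"
begin

text \<open>A real Lie algebra structure on a finite-dimensional real vector space 'a
  (modelled as a euclidean_space; the inner product is irrelevant): a bilinear,
  alternating bracket satisfying the Jacobi identity.\<close>
definition lie_algebra :: "('a::euclidean_space \<Rightarrow> 'a \<Rightarrow> 'a) \<Rightarrow> bool" where
  "lie_algebra br \<longleftrightarrow>
     bilinear br \<and>
     (\<forall>x. br x x = 0) \<and>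
     (\<forall>x y z. br x (br y z) + br y (br z x) + br z (br x y) = 0)"

definition derived_algebra :: "('a::euclidean_space \<Rightarrow> 'a \<Rightarrow> 'a) \<Rightarrow> 'a set" where
  "derived_algebra br = span {br x y | x y. True}"

definition abelian_complex_structure :: "('a::euclidean_space \<Rightarrow> 'a \<Rightarrow> 'a) \<Rightarrow> ('a \<Rightarrow> 'a) \<Rightarrow> bool" where
  "abelian_complex_structure br J \<longleftrightarrow>
     linear J \<and> (\<forall>x. J (J x) = - x) \<and> (\<forall>x y. br (J x) (J y) = br x y)"

end

theory Submission
  imports Defs
begin

text \<open>Since the derived algebra is a line spanned by some z \<noteq> 0, the bracket has the form
  [x, y] = \<omega>(x, y) z for an alternating bilinear form \<omega>, so it suffices to find a complex
  structure J with \<omega>(J x, J y) = \<omega>(x, y). Such a J exists on every even-dimensional space,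
  by induction on the dimension: if \<omega> \<noteq> 0, choose u, v with \<omega>(u, v) = 1, let J rotate the
  plane spanned by u and v (u \<mapsto> v \<mapsto> -u), which preserves \<omega> there, and recurse on the
  \<omega>-orthogonal complement of that plane; if \<omega> = 0, any complex structure will do, and one
  is built in the same way from an orthonormal pair.\<close>

definition complex_structure_on :: "'a::real_vector set \<Rightarrow> ('a \<Rightarrow> 'a) \<Rightarrow> bool" where
  "complex_structure_on W J \<longleftrightarrow> linear J \<and> (\<forall>x\<in>W. J x \<in> W \<and> J (J x) = - x)"

lemma bilinear_alternating_skew:
  fixes \<omega> :: "'a::real_vector \<Rightarrow> 'a \<Rightarrow> 'b::real_vector"
  assumes "bilinear \<omega>" and "\<forall>x. \<omega> x x = 0"
  shows "\<omega> y x = - \<omega> x y"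
proof -
  have "\<omega> (x + y) (x + y) = \<omega> x x + \<omega> x y + (\<omega> y x + \<omega> y y)"
    using assms(1) by (simp add: bilinear_ladd bilinear_radd)
  then have "\<omega> y x + \<omega> x y = 0"
    using assms(2) by (simp add: add.commute)
  then show ?thesis
    by (simp add: eq_neg_iff_add_eq_0)
qed

locale dual_pair =
  fixes W :: "'a::euclidean_space set" and u v :: 'a and a b :: "'a \<Rightarrow> real"
  assumes subspace_W: "subspace W" and u_in_W: "u \<in> W" and v_in_W: "v \<in> W"
    and linear_a: "linear a" and linear_b: "linear b"
    and a_u: "a u = 1" and a_v: "a v = 0" and b_u: "b u = 0" and b_v: "b v = 1"
begin

definition complement :: "'a set" where
  "complement = {w\<in>W. a w = 0 \<and> b w = 0}"

definition proj :: "'a \<Rightarrow> 'a" where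
  "proj x = x - a x *\<^sub>R u - b x *\<^sub>R v"

definition extend_by_rotation :: "('a \<Rightarrow> 'a) \<Rightarrow> 'a \<Rightarrow> 'a" where
  "extend_by_rotation J x = a x *\<^sub>R v - b x *\<^sub>R u + J (proj x)"

lemmas linear_simps =
  linear_add[OF linear_a] linear_diff[OF linear_a] linear_scale[OF linear_a] linear_0[OF linear_a]
  linear_add[OF linear_b] linear_diff[OF linear_b] linear_scale[OF linear_b] linear_0[OF linear_b]
  a_u a_v b_u b_v

lemma decompose: "x = a x *\<^sub>R u + b x *\<^sub>R v + proj x"
  by (simp add: proj_def)

lemma subspace_complement: "subspace complement"
  using subspace_W unfolding subspace_def complement_def by (auto simp: linear_simps)

lemma proj_in_complement: "x \<in> W \<Longrightarrow> proj x \<in> complement"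
  using subspace_W u_in_W v_in_W
  by (auto simp: complement_def proj_def linear_simps subspace_diff subspace_scale)

lemma dim_complement: "dim W = dim complement + 2"
proof -
  have "span {u, v} \<subseteq> W"
    using subspace_W u_in_W v_in_W by (simp add: span_minimal)
  moreover have "complement \<subseteq> W"
    by (auto simp: complement_def)
  moreover have "a x *\<^sub>R u + b x *\<^sub>R v \<in> span {u, v}" for x
    by (simp add: span_add span_base span_scale)
  ultimately have sums: "{x + y |x y. x \<in> span {u, v} \<and> y \<in> complement} = W"
    using subspace_W proj_in_complement decompose by (blast intro: subspace_add)
  have "span {u, v} \<inter> complement \<subseteq> {0}"
  proof
    fix x assume x: "x \<in> span {u, v} \<inter> complement"
    then obtain s t where "x = s *\<^sub>R u + t *\<^sub>R v"
      by (auto simp: span_insert span_singleton) (metis add.commute diff_add_cancel)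
    then show "x \<in> {0}"
      using x by (simp add: complement_def linear_simps)
  qed
  then have trivial_meet: "dim (span {u, v} \<inter> complement) = 0"
    by simp
  have "v \<noteq> 0" and "u \<notin> span {v}"
    using linear_simps by (auto simp: span_singleton)
  then have "dim (span {u, v}) = 2"
    by (simp add: dim_insert)
  then show ?thesis
    using dim_sums_Int[OF subspace_span subspace_complement, of "{u, v}"] sums trivial_meet
    by simp
qed

lemma complex_structure_extend_by_rotation:
  assumes "complex_structure_on complement J"
  shows "complex_structure_on W (extend_by_rotation J)"
  unfolding complex_structure_on_def
proof (intro conjI ballI)
  have "linear J"
    using assms by (simp add: complex_structure_on_def)
  then show "linear (extend_by_rotation J)"
    by (intro linearI) (auto simp: extend_by_rotation_def proj_def linear_simps linear_add
        linear_diff linear_scale algebra_simps)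
next
  fix x assume "x \<in> W"
  then have p: "proj x \<in> complement"
    by (rule proj_in_complement)
  then have q: "J (proj x) \<in> complement" and "J (J (proj x)) = - proj x"
    using assms by (auto simp: complex_structure_on_def)
  have a: "a (extend_by_rotation J x) = - b x" and b: "b (extend_by_rotation J x) = a x"
    using q by (auto simp: extend_by_rotation_def complement_def linear_simps)
  then have "proj (extend_by_rotation J x) = J (proj x)"
    by (simp add: proj_def extend_by_rotation_def)
  then show "extend_by_rotation J (extend_by_rotation J x) = - x"
    using a b \<open>J (J (proj x)) = - proj x\<close> by (simp add: extend_by_rotation_def proj_def algebra_simps)
  show "extend_by_rotation J x \<in> W"
    using q subspace_W u_in_W v_in_W unfolding extend_by_rotation_def complement_def
    by (intro subspace_add subspace_diff subspace_scale) auto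
qed

end

lemma dual_pair_exists:
  fixes W :: "'a::euclidean_space set"
  assumes "subspace W" and "2 \<le> dim W"
  obtains u v a b where "dual_pair W u v a b"
proof -
  obtain B where "B \<subseteq> W" and orth: "pairwise orthogonal B"
    and unit: "\<And>x. x \<in> B \<Longrightarrow> norm x = 1" and "card B = dim W"
    using orthonormal_basis_subspace[OF assms(1)] by metis
  then obtain u v where "u \<in> B" "v \<in> B" "u \<noteq> v"
    using assms(2) by (metis card_le_Suc_iff numeral_2_eq_2 insert_iff)
  moreover have "linear (\<lambda>x. x \<bullet> w)" for w :: 'a
    by (simp add: bounded_linear.linear bounded_linear_inner_left)
  moreover have "x \<bullet> x = 1" if "x \<in> B" for x
    using unit[OF that] by (simp add: dot_square_norm)
  moreover have "u \<bullet> v = 0" "v \<bullet> u = 0"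
    using orth \<open>u \<in> B\<close> \<open>v \<in> B\<close> \<open>u \<noteq> v\<close> by (auto simp: pairwise_def orthogonal_def)
  ultimately have "dual_pair W u v (\<lambda>x. x \<bullet> u) (\<lambda>x. x \<bullet> v)"
    using \<open>B \<subseteq> W\<close> assms(1) by (simp add: dual_pair_def subset_iff)
  then show ?thesis ..
qed

locale symplectic_pair =
  fixes W :: "'a::euclidean_space set" and u v :: 'a and \<omega> :: "'a \<Rightarrow> 'a \<Rightarrow> real"
  assumes subspace_W: "subspace W" and u_in_W: "u \<in> W" and v_in_W: "v \<in> W"
    and bilinear_form: "bilinear \<omega>" and alternating: "\<forall>x. \<omega> x x = 0"
    and form_u_v: "\<omega> u v = 1"
begin

lemma skew: "\<omega> y x = - \<omega> x y"
  using bilinear_alternating_skew[OF bilinear_form alternating] .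

text \<open>With these functionals the complement is the \<omega>-orthogonal complement of the plane
  spanned by u and v.\<close>

sublocale dual_pair W u v "\<lambda>x. \<omega> x v" "\<omega> u"
  using subspace_W u_in_W v_in_W bilinear_form alternating form_u_v skew[of v u]
  by (simp add: dual_pair_def bilinear_def)

lemma form_expand:
  assumes "w \<in> complement" and "w' \<in> complement"
  shows "\<omega> (\<alpha> *\<^sub>R u + \<beta> *\<^sub>R v + w) (\<gamma> *\<^sub>R u + \<delta> *\<^sub>R v + w') = \<alpha> * \<delta> - \<beta> * \<gamma> + \<omega> w w'"
proof -
  have orth: "\<omega> u w = 0" "\<omega> w v = 0" "\<omega> u w' = 0" "\<omega> w' v = 0"
    using assms by (auto simp: complement_def)
  then have "\<omega> w u = 0" "\<omega> v w' = 0" "\<omega> v u = -1"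
    using orth form_u_v skew[of w u] skew[of v w'] skew[of v u] by simp_all
  then show ?thesis
    using orth alternating form_u_v bilinear_form
    by (simp add: bilinear_ladd bilinear_radd bilinear_lmul bilinear_rmul algebra_simps)
qed

lemma form_extend_by_rotation:
  assumes "complex_structure_on complement J"
    and "\<forall>x\<in>complement. \<forall>y\<in>complement. \<omega> (J x) (J y) = \<omega> x y"
    and "x \<in> W" and "y \<in> W"
  shows "\<omega> (extend_by_rotation J x) (extend_by_rotation J y) = \<omega> x y"
proof -
  have px: "proj x \<in> complement" and py: "proj y \<in> complement"
    using assms(3,4) by (simp_all add: proj_in_complement)
  then have "J (proj x) \<in> complement" and "J (proj y) \<in> complement"
    using assms(1) by (simp_all add: complex_structure_on_def)
  have rot: "extend_by_rotation J z = (- \<omega> u z) *\<^sub>R u + \<omega> z v *\<^sub>R v + J (proj z)" for z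
    by (simp add: extend_by_rotation_def)
  have "\<omega> (extend_by_rotation J x) (extend_by_rotation J y)
      = \<omega> x v * \<omega> u y - \<omega> u x * \<omega> y v + \<omega> (J (proj x)) (J (proj y))"
    unfolding rot using \<open>J (proj x) \<in> complement\<close> \<open>J (proj y) \<in> complement\<close>
    by (subst form_expand) simp_all
  also have "\<dots> = \<omega> x v * \<omega> u y - \<omega> u x * \<omega> y v + \<omega> (proj x) (proj y)"
    using assms(2) px py by simp
  also have "\<dots> = \<omega> (\<omega> x v *\<^sub>R u + \<omega> u x *\<^sub>R v + proj x) (\<omega> y v *\<^sub>R u + \<omega> u y *\<^sub>R v + proj y)"
    using px py by (subst form_expand) simp_all
  also have "\<dots> = \<omega> x y"
    using decompose[of x] decompose[of y] by simp
  finally show ?thesis .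
qed

end

lemma compatible_complex_structure_exists:
  fixes \<omega> :: "'a::euclidean_space \<Rightarrow> 'a \<Rightarrow> real"
  assumes "bilinear \<omega>" and "\<forall>x. \<omega> x x = 0" and "subspace W" and "even (dim W)"
  shows "\<exists>J. complex_structure_on W J \<and> (\<forall>x\<in>W. \<forall>y\<in>W. \<omega> (J x) (J y) = \<omega> x y)"
proof -
  obtain k where "dim W = 2 * k"
    using assms(4) by blast
  with assms(3) show ?thesis
  proof (induction k arbitrary: W)
    case 0
    then have "W \<subseteq> {0}"
      by simp
    then show ?case
      by (intro exI[of _ "\<lambda>x. 0"]) (auto simp: complex_structure_on_def linear_zero)
  next
    case (Suc k)
    show ?case
    proof (cases "\<exists>u\<in>W. \<exists>v\<in>W. \<omega> u v \<noteq> 0")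
      case True
      then obtain u v where "u \<in> W" "v \<in> W" "\<omega> u v \<noteq> 0"
        by blast
      then interpret symplectic_pair W "(1 / \<omega> u v) *\<^sub>R u" v \<omega>
        using assms(1,2) Suc.prems(1) by unfold_locales (simp_all add: subspace_scale bilinear_lmul)
      have "dim complement = 2 * k"
        using dim_complement Suc.prems(2) by simp
      then obtain J where "complex_structure_on complement J"
        and "\<forall>x\<in>complement. \<forall>y\<in>complement. \<omega> (J x) (J y) = \<omega> x y"
        using Suc.IH subspace_complement by blast
      then have "complex_structure_on W (extend_by_rotation J)"
        and "\<forall>x\<in>W. \<forall>y\<in>W. \<omega> (extend_by_rotation J x) (extend_by_rotation J y) = \<omega> x y"
        by (simp_all add: complex_structure_extend_by_rotation form_extend_by_rotation)
      then show ?thesis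
        by blast
    next
      case False
      then have "\<forall>x\<in>W. \<forall>y\<in>W. \<omega> x y = 0"
        by blast
      have "2 \<le> dim W"
        using Suc.prems(2) by simp
      then obtain u v a b where "dual_pair W u v a b"
        using dual_pair_exists Suc.prems(1) by blast
      then interpret dual_pair W u v a b .
      have "dim complement = 2 * k"
        using dim_complement Suc.prems(2) by simp
      then obtain J where "complex_structure_on complement J"
        using Suc.IH subspace_complement by blast
      then have "complex_structure_on W (extend_by_rotation J)"
        by (rule complex_structure_extend_by_rotation)
      then show ?thesis
        using \<open>\<forall>x\<in>W. \<forall>y\<in>W. \<omega> x y = 0\<close> by (auto simp: complex_structure_on_def)
    qed
  qed
qed

lemma dim_1_subspaceE:
  assumes "subspace S" and "dim S = 1"
  obtains z where "z \<noteq> 0" and "S = span {z}"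
proof -
  obtain B where "B \<subseteq> S" "independent B" "S \<subseteq> span B" "card B = 1"
    using basis_exists assms(2) by metis
  then obtain z where "B = {z}"
    using card_1_singletonE by blast
  moreover have "span B = S"
    using \<open>B \<subseteq> S\<close> \<open>S \<subseteq> span B\<close> assms(1) by (rule span_subspace)
  ultimately have "z \<noteq> 0" and "S = span {z}"
    using \<open>independent B\<close> dependent_zero by auto
  then show ?thesis ..
qed

lemma bilinear_into_line_factor:
  fixes f :: "'a::real_vector \<Rightarrow> 'b::real_vector \<Rightarrow> 'c::real_inner"
  assumes "bilinear f" and "z \<noteq> 0" and "\<forall>x y. f x y \<in> span {z}"
  obtains \<omega> where "bilinear \<omega>" and "\<forall>x y. f x y = \<omega> x y *\<^sub>R z"
proof
  let ?c = "\<lambda>w. (w \<bullet> z) / (z \<bullet> z)"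
  have "linear ?c"
    by (intro linearI) (simp_all add: inner_add_left add_divide_distrib)
  then show "bilinear (\<lambda>x y. ?c (f x y))"
    using assms(1) by (auto simp: bilinear_def intro: linear_compose[unfolded o_def])
  show "\<forall>x y. f x y = ?c (f x y) *\<^sub>R z"
  proof (intro allI)
    fix x y
    obtain t where "f x y = t *\<^sub>R z"
      using assms(3) by (auto simp: span_singleton)
    then show "f x y = ?c (f x y) *\<^sub>R z"
      using assms(2) by simp
  qed
qed

theorem mainTheorem9:
  fixes br :: "'a::euclidean_space \<Rightarrow> 'a \<Rightarrow> 'a"
  assumes "lie_algebra br"
    and "even DIM('a)"
    and "dim (derived_algebra br) = 1"
  shows "\<exists>J. abelian_complex_structure br J"
proof -
  have bilinear: "bilinear br" and alternating: "\<forall>x. br x x = 0"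
    using assms(1) by (simp_all add: lie_algebra_def)
  obtain z where "z \<noteq> 0" and line: "derived_algebra br = span {z}"
    using dim_1_subspaceE assms(3) unfolding derived_algebra_def by (metis subspace_span)
  have "\<forall>x y. br x y \<in> span {z}"
    unfolding line[symmetric] derived_algebra_def by (blast intro: span_base)
  then obtain \<omega> where "bilinear \<omega>" and factor: "\<forall>x y. br x y = \<omega> x y *\<^sub>R z"
    using bilinear_into_line_factor bilinear \<open>z \<noteq> 0\<close> by blast
  moreover have "\<forall>x. \<omega> x x = 0"
    using alternating factor \<open>z \<noteq> 0\<close> by (metis scale_eq_0_iff)
  ultimately obtain J where "complex_structure_on UNIV J" and "\<forall>x y. \<omega> (J x) (J y) = \<omega> x y"
    using compatible_complex_structure_exists[of \<omega> UNIV] assms(2) by auto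
  then show ?thesis
    using factor by (auto simp: abelian_complex_structure_def complex_structure_on_def)
qed

end
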